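(* (Schwarz lemma for biharmonic mappings) Let $H:\mathbb{D}\to\mathbb{D}$ be harmonic, $H=w_1+\overline{w_2}$ with $w_1,w_2$ analytic in $\mathbb{D}=\{|z|<1\}$. Suppose $u:\mathbb{D}\to\mathbb{D}$ is the biharmonic function $$u(z)=H(z)+\frac{1}{2}(1-|z|^{2})\big(zw_1'(z)+\overline{zw_2'(z)}\big)$$ and $u(0)=0$. Then for all $z\in\mathbb{D}$, $$|u(z)|\le \frac{4}{\pi}\arctan(|z|)+|z|,$$ and $$\Lambda_u(0)=|u_z(0)|+|u_{\overline z}(0)|\le \frac{6}{\pi}.$$ *)

theory Defs
  imports "HOL-Analysis.Analysis"
begin

definition wirtinger_z :: "(complex \<Rightarrow> complex) \<Rightarrow> complex \<Rightarrow> complex" where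
  "wirtinger_z u z = (frechet_derivative u (at z) 1 - \<i> * frechet_derivative u (at z) \<i>) / 2"

definition wirtinger_zbar :: "(complex \<Rightarrow> complex) \<Rightarrow> complex \<Rightarrow> complex" where
  "wirtinger_zbar u z = (frechet_derivative u (at z) 1 + \<i> * frechet_derivative u (at z) \<i>) / 2"

definition Lambda :: "(complex \<Rightarrow> complex) \<Rightarrow> complex \<Rightarrow> real" where
  "Lambda u z = norm (wirtinger_z u z) + norm (wirtinger_zbar u z)"

end

theory Submission
  imports Defs "HOL-Complex_Analysis.Complex_Analysis"
begin

text \<open>
  For a unimodular \<open>e\<close>, the function \<open>g = cnj e * w1 + e * w2\<close> is holomorphic with
  \<open>Re g = Re (cnj e * H)\<close>, so it maps the disc into the strip \<open>\<bar>Re w\<bar> < 1\<close>.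
  Composing with the conformal map of this strip onto the disc, the Schwarz lemma gives
  \<open>\<bar>Re g(z)\<bar> \<le> 4/pi arctan \<bar>z\<bar>\<close> (when \<open>g(0) = 0\<close>) and the Schwarz--Pick lemma gives
  \<open>\<bar>g'(z)\<bar> (1 - \<bar>z\<bar>^2) \<le> 4/pi\<close>. Choosing \<open>e\<close> in the direction of \<open>H(z)\<close>, resp. so that
  \<open>cnj e * w1'(z)\<close> and \<open>e * w2'(z)\<close> point the same way, yields \<open>\<bar>H(z)\<bar> \<le> 4/pi arctan \<bar>z\<bar>\<close>
  and \<open>(\<bar>w1'(z)\<bar> + \<bar>w2'(z)\<bar>) (1 - \<bar>z\<bar>^2) \<le> 4/pi\<close>. The first bound controls \<open>H\<close>, the second
  the correction term of \<open>u\<close>, which is at most \<open>2/pi \<bar>z\<bar>\<close>; and at \<open>0\<close> the Wirtinger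
  derivatives of \<open>u\<close> are \<open>3/2 w1'(0)\<close> and \<open>3/2 cnj (w2'(0))\<close>.
\<close>

lemma Moebius_function_has_field_derivative:
  assumes "cnj c * w \<noteq> 1"
  shows "(Moebius_function 0 c has_field_derivative (1 - cnj c * c) / (1 - cnj c * w)\<^sup>2) (at w)"
proof -
  have nz: "1 - cnj c * w \<noteq> 0" using assms by simp
  have "Moebius_function 0 c = (\<lambda>w. (w - c) / (1 - cnj c * w))"
    by (simp add: fun_eq_iff Moebius_function_simple)
  then show ?thesis
    apply (simp only:)
    apply (rule derivative_eq_intros refl | simp add: nz)+
    using nz by (simp add: divide_simps power2_eq_square) (simp add: algebra_simps power2_eq_square)
qed

lemma Schwarz_Pick:
  assumes f_hol: "f holomorphic_on ball 0 1" and f_in: "\<And>z. norm z < 1 \<Longrightarrow> norm (f z) < 1"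
    and a: "norm a < 1"
  shows "norm (deriv f a) * (1 - (norm a)\<^sup>2) \<le> 1 - (norm (f a))\<^sup>2"
proof -
  define b where "b = f a"
  have b: "norm b < 1" using f_in a by (simp add: b_def)
  define G where "G = Moebius_function 0 b \<circ> f \<circ> Moebius_function 0 (-a)"
  have G_hol: "G holomorphic_on ball 0 1"
    unfolding G_def using a b f_in Moebius_function_norm_lt_1[of "-a" _ 0]
    by (intro holomorphic_on_compose_gen[OF Moebius_function_holomorphic
          holomorphic_on_compose_gen[OF f_hol Moebius_function_holomorphic]]) auto
  have G0: "G 0 = 0"
    by (simp add: G_def Moebius_function_of_zero b_def Moebius_function_eq_zero)
  have G_in: "norm (G z) < 1" if "norm z < 1" for z
    using that a b f_in by (simp add: G_def Moebius_function_norm_lt_1)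
  have norm_one_minus: "norm (1 - cnj z * z) = 1 - (norm z)\<^sup>2" if "norm z < 1" for z
  proof -
    have "cnj z * z = of_real ((norm z)\<^sup>2)"
      by (subst complex_norm_square) (rule mult.commute)
    then have "1 - cnj z * z = of_real (1 - (norm z)\<^sup>2)" by simp
    with that show ?thesis by (simp add: abs_square_le_1 del: of_real_diff of_real_power)
  qed
  have "0 < 1 - (norm b)\<^sup>2" using b by (simp add: abs_square_less_1)
  then have "1 - cnj b * b \<noteq> 0" using norm_one_minus[OF b] by auto
  then have dpsi: "(Moebius_function 0 b has_field_derivative 1 / (1 - cnj b * b)) (at b)"
    using Moebius_function_has_field_derivative[of b b] by (simp add: power2_eq_square)
  have dphi: "(Moebius_function 0 (-a) has_field_derivative 1 - cnj a * a) (at 0)"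
    using Moebius_function_has_field_derivative[of "-a" 0] by simp
  have df: "(f has_field_derivative deriv f a) (at a)"
    using f_hol a by (simp add: holomorphic_derivI[OF _ open_ball])
  have "(Moebius_function 0 b \<circ> f has_field_derivative 1 / (1 - cnj b * b) * deriv f a)
      (at (Moebius_function 0 (-a) 0))"
    unfolding Moebius_function_of_zero using DERIV_chain[OF dpsi[unfolded b_def] df]
    by (simp add: b_def)
  from DERIV_chain[OF this dphi]
  have "(G has_field_derivative 1 / (1 - cnj b * b) * deriv f a * (1 - cnj a * a)) (at 0)"
    by (simp add: G_def comp_assoc)
  then have "norm (1 / (1 - cnj b * b) * deriv f a * (1 - cnj a * a)) \<le> 1"
    using Schwarz_Lemma(2)[OF G_hol G0 G_in, of 0] DERIV_imp_deriv by fastforce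
  then have "norm (deriv f a) * (1 - (norm a)\<^sup>2) / (1 - (norm b)\<^sup>2) \<le> 1"
    by (simp only: norm_mult norm_divide norm_one norm_one_minus[OF a] norm_one_minus[OF b]) simp
  with \<open>0 < 1 - (norm b)\<^sup>2\<close> show ?thesis by (simp add: b_def)
qed

text \<open>This is \<open>\<i> tan (pi w / 4)\<close>, a conformal map of the strip \<open>\<bar>Re w\<bar> < 1\<close> onto the unit disc.\<close>
definition strip_to_disc :: "complex \<Rightarrow> complex" where
  "strip_to_disc w = (exp (\<i> * of_real (pi/2) * w) - 1) / (exp (\<i> * of_real (pi/2) * w) + 1)"

lemma Re_exp_strip_pos:
  assumes "\<bar>Re w\<bar> < 1"
  shows "0 < Re (exp (\<i> * of_real (pi/2) * w))"
proof -
  have "\<bar>pi/2 * Re w\<bar> < pi/2" using assms by (simp add: abs_mult)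
  then have "0 < cos (pi/2 * Re w)" by (intro cos_gt_zero_pi) (auto simp: abs_less_iff)
  then show ?thesis by (simp add: Re_exp)
qed

lemma norm_strip_to_disc_less_1:
  assumes "\<bar>Re w\<bar> < 1"
  shows "norm (strip_to_disc w) < 1"
proof -
  define E where "E = exp (\<i> * of_real (pi/2) * w)"
  have "0 < Re E" unfolding E_def by (rule Re_exp_strip_pos[OF assms])
  then have "norm (E - 1) < norm (E + 1)"
    by (simp add: cmod_def power2_eq_square algebra_simps)
  moreover have "strip_to_disc w = (E - 1) / (E + 1)" by (simp add: strip_to_disc_def E_def)
  ultimately show ?thesis by (simp add: norm_divide divide_less_eq)
qed

lemma strip_to_disc_has_field_derivative:
  assumes "\<bar>Re w\<bar> < 1"
  shows "(strip_to_disc has_field_derivative \<i> * of_real (pi/4) * (1 - (strip_to_disc w)\<^sup>2)) (at w)"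
proof -
  define E where "E = exp (\<i> * of_real (pi/2) * w)"
  have "E + 1 \<noteq> 0"
    using Re_exp_strip_pos[OF assms] by (auto simp: E_def complex_eq_iff)
  have "(strip_to_disc has_field_derivative
      (E * (\<i> * of_real (pi/2)) * (E + 1) - (E - 1) * (E * (\<i> * of_real (pi/2)))) / (E + 1)\<^sup>2) (at w)"
    unfolding strip_to_disc_def [abs_def] E_def
    by (rule derivative_eq_intros refl | use \<open>E + 1 \<noteq> 0\<close> in \<open>simp add: E_def power2_eq_square\<close>)+
  moreover have "(E * (\<i> * of_real (pi/2)) * (E + 1) - (E - 1) * (E * (\<i> * of_real (pi/2)))) / (E + 1)\<^sup>2
      = \<i> * of_real (pi/4) * (1 - (strip_to_disc w)\<^sup>2)"
  proof -
    have "strip_to_disc w = (E - 1) / (E + 1)" by (simp add: strip_to_disc_def E_def)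
    moreover have "1 - ((E - 1) / (E + 1))\<^sup>2 = 4 * E / (E + 1)\<^sup>2"
      using \<open>E + 1 \<noteq> 0\<close> by (simp add: field_simps) (simp add: algebra_simps power2_eq_square)
    moreover have "E * (\<i> * of_real (pi/2)) * (E + 1) - (E - 1) * (E * (\<i> * of_real (pi/2)))
        = \<i> * of_real pi * E"
      by (simp add: field_simps)
    ultimately show ?thesis by simp
  qed
  ultimately show ?thesis by (simp only:)
qed

lemma tan_square_eq_cos_double:
  fixes t :: real
  assumes "cos t \<noteq> 0"
  shows "(tan t)\<^sup>2 = (1 - cos (2 * t)) / (1 + cos (2 * t))"
proof -
  have "1 - cos (2 * t) = 2 * (sin t)\<^sup>2" "1 + cos (2 * t) = 2 * (cos t)\<^sup>2"
    by (simp add: cos_double_sin) (simp add: cos_double_cos)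
  then show ?thesis by (simp add: tan_def power_divide)
qed

text \<open>
  Writing \<open>exp (\<i> pi w / 2) = rho e^(\<i> alpha)\<close> with \<open>c = cos alpha > 0\<close>, the left side is
  \<open>arctan (tan (\<bar>alpha\<bar> / 2))\<close> and \<open>tan\<^sup>2 (\<bar>alpha\<bar> / 2) = (1 - c) / (1 + c)\<close>, while
  \<open>\<bar>strip_to_disc w\<bar>\<^sup>2 = (rho\<^sup>2 - 2 rho c + 1) / (rho\<^sup>2 + 2 rho c + 1)\<close>; the comparison
  of these two fractions is equivalent to \<open>0 \<le> c (rho - 1)\<^sup>2\<close>.
\<close>
lemma arctan_norm_strip_to_disc_ge:
  assumes w: "\<bar>Re w\<bar> < 1"
  shows "pi/4 * \<bar>Re w\<bar> \<le> arctan (norm (strip_to_disc w))"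
proof -
  define E where "E = exp (\<i> * of_real (pi/2) * w)"
  define \<rho> where "\<rho> = exp (-(pi/2) * Im w)"
  define \<alpha> where "\<alpha> = pi/2 * Re w"
  define t where "t = pi/4 * \<bar>Re w\<bar>"
  define c where "c = cos \<alpha>"
  have ReE: "Re E = \<rho> * c" by (simp add: E_def \<rho>_def c_def \<alpha>_def Re_exp)
  have ImE: "Im E = \<rho> * sin \<alpha>" by (simp add: E_def \<rho>_def \<alpha>_def Im_exp)
  have sin_sq: "(sin \<alpha>)\<^sup>2 = 1 - c\<^sup>2" by (simp add: c_def sin_squared_eq)
  have t: "0 \<le> t" "t < pi/4" using w by (auto simp: t_def)
  have "2 * t = \<bar>\<alpha>\<bar>" by (simp add: t_def \<alpha>_def abs_mult)
  then have c: "c = cos (2 * t)" by (simp add: c_def)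
  have "0 < c" unfolding c by (rule cos_gt_zero_pi) (use t in auto)
  have "0 < \<rho>" by (simp add: \<rho>_def)
  have "0 < cos t" using t by (intro cos_gt_zero_pi) auto
  have "(norm (E - 1))\<^sup>2 = \<rho>\<^sup>2 - 2*\<rho>*c + 1"
    by (simp add: cmod_power2 ReE ImE power_mult_distrib sin_sq power2_diff algebra_simps)
  moreover have "(norm (E + 1))\<^sup>2 = \<rho>\<^sup>2 + 2*\<rho>*c + 1"
    by (simp add: cmod_power2 ReE ImE power_mult_distrib sin_sq power2_sum algebra_simps)
  moreover have "strip_to_disc w = (E - 1) / (E + 1)" by (simp add: strip_to_disc_def E_def)
  ultimately have norm_sq: "(norm (strip_to_disc w))\<^sup>2 = (\<rho>\<^sup>2 - 2*\<rho>*c + 1) / (\<rho>\<^sup>2 + 2*\<rho>*c + 1)"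
    by (simp add: norm_divide power_divide)
  have "(1 - c) / (1 + c) \<le> (\<rho>\<^sup>2 - 2*\<rho>*c + 1) / (\<rho>\<^sup>2 + 2*\<rho>*c + 1)"
  proof -
    have "(1 - c) * (\<rho>\<^sup>2 + 2*\<rho>*c + 1) \<le> (\<rho>\<^sup>2 - 2*\<rho>*c + 1) * (1 + c)"
    proof -
      have "0 \<le> 2*c*(\<rho> - 1)\<^sup>2" using \<open>0 < c\<close> by simp
      then show ?thesis by (simp add: power2_eq_square algebra_simps)
    qed
    moreover have "0 < \<rho>\<^sup>2 + 2*\<rho>*c + 1" using \<open>0 < c\<close> \<open>0 < \<rho>\<close> by (simp add: add_pos_nonneg)
    ultimately show ?thesis using \<open>0 < c\<close> by (simp add: divide_simps)
  qed
  moreover have "(tan t)\<^sup>2 = (1 - c) / (1 + c)"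
    using \<open>0 < cos t\<close> by (simp add: c tan_square_eq_cos_double)
  ultimately have "(tan t)\<^sup>2 \<le> (norm (strip_to_disc w))\<^sup>2" by (simp add: norm_sq)
  moreover have "0 \<le> tan t" using \<open>0 < cos t\<close> t by (simp add: tan_def sin_ge_zero)
  ultimately have "tan t \<le> norm (strip_to_disc w)"
    by (meson norm_ge_zero power2_le_imp_le)
  moreover have "arctan (tan t) = t" using t by (intro arctan_tan) auto
  ultimately show ?thesis unfolding t_def by (metis arctan_le_iff)
qed

lemma strip_to_disc_comp_has_field_derivative:
  assumes g_hol: "g holomorphic_on ball 0 1" and g_strip: "\<And>z. norm z < 1 \<Longrightarrow> \<bar>Re (g z)\<bar> < 1"
    and z: "norm z < 1"
  shows "((\<lambda>z. strip_to_disc (g z)) has_field_derivative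
           \<i> * of_real (pi/4) * (1 - (strip_to_disc (g z))\<^sup>2) * deriv g z) (at z)"
  using z by (intro DERIV_chain2[where g = g and x = z,
        OF strip_to_disc_has_field_derivative[OF g_strip[OF z]] holomorphic_derivI[OF g_hol open_ball]]) simp

lemma strip_to_disc_comp_holomorphic:
  assumes g_hol: "g holomorphic_on ball 0 1" and g_strip: "\<And>z. norm z < 1 \<Longrightarrow> \<bar>Re (g z)\<bar> < 1"
  shows "(\<lambda>z. strip_to_disc (g z)) holomorphic_on ball 0 1"
  unfolding holomorphic_on_open[OF open_ball]
  using strip_to_disc_comp_has_field_derivative[OF g_hol g_strip] by (metis mem_ball_0)

lemma strip_Schwarz:
  assumes g_hol: "g holomorphic_on ball 0 1" and g_strip: "\<And>z. norm z < 1 \<Longrightarrow> \<bar>Re (g z)\<bar> < 1"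
    and g0: "g 0 = 0" and z: "norm z < 1"
  shows "\<bar>Re (g z)\<bar> \<le> 4/pi * arctan (norm z)"
proof -
  have "strip_to_disc (g 0) = 0" by (simp add: g0 strip_to_disc_def)
  then have "norm (strip_to_disc (g z)) \<le> norm z"
    using Schwarz_Lemma(1)[OF strip_to_disc_comp_holomorphic[OF g_hol g_strip] _ _ z]
    by (simp add: norm_strip_to_disc_less_1 g_strip)
  then have "pi/4 * \<bar>Re (g z)\<bar> \<le> arctan (norm z)"
    using arctan_norm_strip_to_disc_ge[OF g_strip[OF z]] arctan_monotone' by (blast intro: order_trans)
  then show ?thesis by (simp add: field_simps)
qed

lemma strip_Schwarz_Pick:
  assumes g_hol: "g holomorphic_on ball 0 1" and g_strip: "\<And>z. norm z < 1 \<Longrightarrow> \<bar>Re (g z)\<bar> < 1"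
    and z: "norm z < 1"
  shows "norm (deriv g z) * (1 - (norm z)\<^sup>2) \<le> 4/pi"
proof -
  define F where "F = (\<lambda>z. strip_to_disc (g z))"
  have F_hol: "F holomorphic_on ball 0 1"
    unfolding F_def by (rule strip_to_disc_comp_holomorphic[OF g_hol g_strip])
  have F_in: "norm (F z) < 1" if "norm z < 1" for z
    using that by (simp add: F_def norm_strip_to_disc_less_1 g_strip)
  have "norm (deriv F z) * (1 - (norm z)\<^sup>2) \<le> 1 - (norm (F z))\<^sup>2"
    by (rule Schwarz_Pick[OF F_hol F_in z])
  also have "\<dots> \<le> norm (1 - (F z)\<^sup>2)"
    using norm_triangle_ineq2[of 1 "(F z)\<^sup>2"] by (simp add: norm_power)
  finally have "pi/4 * (norm (deriv g z) * (1 - (norm z)\<^sup>2)) * norm (1 - (F z)\<^sup>2) \<le> 1 * norm (1 - (F z)\<^sup>2)"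
    using DERIV_imp_deriv[OF strip_to_disc_comp_has_field_derivative[OF g_hol g_strip z]]
    by (simp add: F_def norm_mult mult_ac)
  moreover have "0 < norm (1 - (F z)\<^sup>2)"
  proof -
    have "norm ((F z)\<^sup>2) < 1" using F_in[OF z] by (simp add: norm_power abs_square_less_1)
    then show ?thesis by (metis norm_one order_less_irrefl right_minus_eq zero_less_norm_iff)
  qed
  ultimately have "pi/4 * (norm (deriv g z) * (1 - (norm z)\<^sup>2)) \<le> 1"
    by (simp only: mult_le_cancel_right)
  then show ?thesis by (simp add: field_simps)
qed

lemma of_real_norm_mult_cis_Arg: "of_real (norm z) * cis (Arg z) = z"
  by (simp add: rcis_cmod_Arg flip: rcis_def)

lemma cnj_cis_Arg_mult: "cnj (cis (Arg x)) * x = of_real (norm x)"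
proof -
  have "cnj (cis (Arg x)) * x = cnj (cis (Arg x)) * (of_real (norm x) * cis (Arg x))"
    by (simp only: of_real_norm_mult_cis_Arg)
  also have "\<dots> = of_real (norm x)"
    by (simp add: cis_cnj cis_mult)
  finally show ?thesis .
qed

lemma unimodular_aligning_sum:
  fixes a b :: complex
  obtains e where "norm e = 1" "norm (cnj e * a + e * b) = norm a + norm b"
proof
  define e where "e = cis ((Arg a - Arg b) / 2)"
  show "norm e = 1" by (simp add: e_def)
  have "cnj e * a + e * b
      = of_real (norm a) * (cnj e * cis (Arg a)) + of_real (norm b) * (e * cis (Arg b))"
    by (simp only: mult.left_commute[of "of_real _"] of_real_norm_mult_cis_Arg)
  also have "\<dots> = of_real (norm a + norm b) * cis ((Arg a + Arg b) / 2)"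
    by (simp add: e_def cis_cnj cis_mult field_simps)
  finally show "norm (cnj e * a + e * b) = norm a + norm b"
    by (simp add: norm_mult del: of_real_add)
qed

lemma Re_cnj_mult_add_mult: "Re (cnj e * x + e * y) = Re (cnj e * (x + cnj y))"
  by (simp add: distrib_left right_diff_distrib)

lemma abs_Re_unimodular_mult_le: "norm e = 1 \<Longrightarrow> \<bar>Re (e * x)\<bar> \<le> norm x"
  by (metis abs_Re_le_cmod mult_cancel_right1 norm_mult)

lemma harmonic_Schwarz:
  assumes w1_hol: "w1 holomorphic_on ball 0 1" and w2_hol: "w2 holomorphic_on ball 0 1"
    and H_in: "\<And>z. norm z < 1 \<Longrightarrow> norm (w1 z + cnj (w2 z)) < 1"
    and H0: "w1 0 + cnj (w2 0) = 0" and z: "norm z < 1"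
  shows "norm (w1 z + cnj (w2 z)) \<le> 4/pi * arctan (norm z)"
proof -
  define e where "e = cis (Arg (w1 z + cnj (w2 z)))"
  define g where "g = (\<lambda>\<zeta>. cnj e * w1 \<zeta> + e * w2 \<zeta> - (cnj e * w1 0 + e * w2 0))"
  have Re_g: "Re (g \<zeta>) = Re (cnj e * (w1 \<zeta> + cnj (w2 \<zeta>)))" for \<zeta>
    by (simp only: g_def minus_complex.sel Re_cnj_mult_add_mult H0 mult_zero_right
        zero_complex.sel diff_0_right)
  have "g holomorphic_on ball 0 1" unfolding g_def by (intro holomorphic_intros w1_hol w2_hol)
  moreover have "\<bar>Re (g \<zeta>)\<bar> < 1" if "norm \<zeta> < 1" for \<zeta>
  proof -
    have "\<bar>Re (cnj e * (w1 \<zeta> + cnj (w2 \<zeta>)))\<bar> \<le> norm (w1 \<zeta> + cnj (w2 \<zeta>))"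
      by (intro abs_Re_unimodular_mult_le) (simp add: e_def)
    with H_in[OF that] show ?thesis unfolding Re_g by linarith
  qed
  moreover have "g 0 = 0" by (simp add: g_def)
  ultimately have "\<bar>Re (g z)\<bar> \<le> 4/pi * arctan (norm z)" using z by (rule strip_Schwarz)
  then show ?thesis by (simp add: Re_g e_def cnj_cis_Arg_mult)
qed

lemma harmonic_Schwarz_Pick:
  assumes w1_hol: "w1 holomorphic_on ball 0 1" and w2_hol: "w2 holomorphic_on ball 0 1"
    and H_in: "\<And>z. norm z < 1 \<Longrightarrow> norm (w1 z + cnj (w2 z)) < 1" and z: "norm z < 1"
  shows "(norm (deriv w1 z) + norm (deriv w2 z)) * (1 - (norm z)\<^sup>2) \<le> 4/pi"
proof -
  obtain e where e: "norm e = 1"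
    and aligned: "norm (cnj e * deriv w1 z + e * deriv w2 z) = norm (deriv w1 z) + norm (deriv w2 z)"
    by (rule unimodular_aligning_sum)
  define g where "g = (\<lambda>\<zeta>. cnj e * w1 \<zeta> + e * w2 \<zeta>)"
  have "g holomorphic_on ball 0 1" unfolding g_def by (intro holomorphic_intros w1_hol w2_hol)
  moreover have "\<bar>Re (g \<zeta>)\<bar> < 1" if "norm \<zeta> < 1" for \<zeta>
  proof -
    have "\<bar>Re (cnj e * (w1 \<zeta> + cnj (w2 \<zeta>)))\<bar> \<le> norm (w1 \<zeta> + cnj (w2 \<zeta>))"
      by (intro abs_Re_unimodular_mult_le) (simp add: e)
    with H_in[OF that] show ?thesis unfolding g_def Re_cnj_mult_add_mult by linarith
  qed
  ultimately have "norm (deriv g z) * (1 - (norm z)\<^sup>2) \<le> 4/pi" using z by (rule strip_Schwarz_Pick)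
  moreover have "(g has_field_derivative cnj e * deriv w1 z + e * deriv w2 z) (at z)"
    unfolding g_def using z
    by (auto intro!: derivative_eq_intros holomorphic_derivI[OF w1_hol open_ball]
        holomorphic_derivI[OF w2_hol open_ball])
  ultimately show ?thesis by (simp add: DERIV_imp_deriv aligned)
qed

lemma norm_biharmonic_correction_le:
  assumes w1_hol: "w1 holomorphic_on ball 0 1" and w2_hol: "w2 holomorphic_on ball 0 1"
    and H_in: "\<And>z. norm z < 1 \<Longrightarrow> norm (w1 z + cnj (w2 z)) < 1" and z: "norm z < 1"
  shows "norm (of_real ((1 - (norm z)\<^sup>2) / 2) * (z * deriv w1 z + cnj (z * deriv w2 z)))
           \<le> 2/pi * norm z"
proof -
  define r where "r = (1 - (norm z)\<^sup>2) / 2"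
  define S where "S = norm (deriv w1 z) + norm (deriv w2 z)"
  have "0 \<le> r" using z by (simp add: r_def abs_square_le_1)
  have "norm (z * deriv w1 z + cnj (z * deriv w2 z)) \<le> norm z * S"
    using norm_triangle_ineq[of "z * deriv w1 z" "cnj (z * deriv w2 z)"]
    by (simp add: S_def norm_mult distrib_left)
  then have "norm (of_real r * (z * deriv w1 z + cnj (z * deriv w2 z))) \<le> r * (norm z * S)"
    using \<open>0 \<le> r\<close> by (simp add: norm_mult mult_left_mono)
  also have "\<dots> = norm z / 2 * (S * (1 - (norm z)\<^sup>2))" by (simp add: r_def)
  also have "\<dots> \<le> norm z / 2 * (4/pi)"
    unfolding S_def by (rule mult_left_mono[OF harmonic_Schwarz_Pick[OF w1_hol w2_hol H_in z]]) auto
  finally show ?thesis by (simp add: r_def)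
qed

lemma biharmonic_has_derivative_0:
  assumes w1_hol: "w1 holomorphic_on ball 0 1" and w2_hol: "w2 holomorphic_on ball 0 1"
  shows "((\<lambda>z. w1 z + cnj (w2 z) + of_real ((1 - (norm z)\<^sup>2) / 2) * (z * deriv w1 z + cnj (z * deriv w2 z)))
          has_derivative (\<lambda>h. 3/2 * deriv w1 0 * h + cnj (3/2 * deriv w2 0 * h))) (at 0)"
proof -
  have hd: "(f has_derivative (\<lambda>h. deriv f 0 * h)) (at 0)" if "f holomorphic_on ball 0 1" for f
    using holomorphic_derivI[OF that open_ball, of 0] by (simp add: has_field_derivative_def)
  have "of_real ((1 - (norm z)\<^sup>2) / 2) * K = (1 - z * cnj z) * K / 2" for z K :: complex
    by (simp add: complex_norm_square flip: of_real_power)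
  moreover have "((\<lambda>z. w1 z + cnj (w2 z) + (1 - z * cnj z) * (z * deriv w1 z + cnj (z * deriv w2 z)) / 2)
      has_derivative (\<lambda>h. 3/2 * deriv w1 0 * h + cnj (3/2 * deriv w2 0 * h))) (at 0)"
    by (auto intro!: derivative_eq_intros hd w1_hol w2_hol holomorphic_deriv
        simp: fun_eq_iff algebra_simps field_simps)
  ultimately show ?thesis by (simp only:)
qed

lemma Lambda_eq_if_has_derivative:
  assumes "(f has_derivative (\<lambda>h. A * h + cnj (B * h))) (at z)"
  shows "Lambda f z = norm A + norm B"
proof -
  have "frechet_derivative f (at z) = (\<lambda>h. A * h + cnj (B * h))"
    using frechet_derivative_at[OF assms] by simp
  then show ?thesis
    unfolding Lambda_def wirtinger_z_def wirtinger_zbar_def by (simp add: algebra_simps)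
qed

theorem theorem3:
  fixes w1 w2 u :: "complex \<Rightarrow> complex"
  assumes w1_hol: "w1 holomorphic_on ball 0 1"
      and w2_hol: "w2 holomorphic_on ball 0 1"
      and H_maps: "\<forall>z\<in>ball 0 1. norm (w1 z + cnj (w2 z)) < 1"
      and u_eq: "\<forall>z\<in>ball 0 1. u z = w1 z + cnj (w2 z)
                   + complex_of_real ((1 - (norm z)\<^sup>2) / 2)
                     * (z * deriv w1 z + cnj (z * deriv w2 z))"
      and u_maps: "\<forall>z\<in>ball 0 1. norm (u z) < 1"
      and u0: "u 0 = 0"
  shows "(\<forall>z\<in>ball 0 1. norm (u z) \<le> 4 / pi * arctan (norm z) + norm z)
         \<and> Lambda u 0 \<le> 6 / pi"
proof -
  have H_in: "\<And>z. norm z < 1 \<Longrightarrow> norm (w1 z + cnj (w2 z)) < 1" using H_maps by simp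
  have H0: "w1 0 + cnj (w2 0) = 0" using u_eq u0 by auto
  have "norm (u z) \<le> 4/pi * arctan (norm z) + norm z" if z: "norm z < 1" for z
  proof -
    have "norm (u z) \<le> norm (w1 z + cnj (w2 z))
        + norm (of_real ((1 - (norm z)\<^sup>2) / 2) * (z * deriv w1 z + cnj (z * deriv w2 z)))"
      using u_eq z norm_triangle_ineq by (metis mem_ball_0)
    also have "\<dots> \<le> 4/pi * arctan (norm z) + 2/pi * norm z"
      by (intro add_mono harmonic_Schwarz norm_biharmonic_correction_le w1_hol w2_hol H_in H0 z)
    also have "2/pi * norm z \<le> norm z"
      by (rule mult_left_le_one_le) (use pi_gt3 in auto)
    finally show ?thesis by simp
  qed
  moreover have "(u has_derivative (\<lambda>h. 3/2 * deriv w1 0 * h + cnj (3/2 * deriv w2 0 * h))) (at 0)"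
    by (rule has_derivative_transform_within_open[OF
          biharmonic_has_derivative_0[OF w1_hol w2_hol] open_ball[of 0 1]]) (use u_eq in auto)
  then have "Lambda u 0 = norm (3/2 * deriv w1 0) + norm (3/2 * deriv w2 0)"
    by (rule Lambda_eq_if_has_derivative)
  moreover have "norm (deriv w1 0) + norm (deriv w2 0) \<le> 4/pi"
    using harmonic_Schwarz_Pick[OF w1_hol w2_hol H_in, of 0] by simp
  ultimately show ?thesis by (auto simp: norm_mult)
qed

end
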